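(* For every $c>1$ there exist $k\in\mathbb{N}$, real numbers $1\le t_1<t_2<\dots<t_k<c$, and $k$ power functions $f_1,\dots,f_k$ (i.e. $f_i(b)=a_ib^{s_i}$ with constants $a_i\in\mathbb{R}$) whose orders $s_i$ satisfy $0\le s_i<c$, such that $$(b+w)^c-b^c-w^c\le\sum_{i=1}^k f_i(b)\,w^{t_i}\qquad\text{for all } b,w\ge0.$$ *)

theory Defs
  imports Complex_Main
begin

text \<open>Real power with the usual convention 0^0 = 1 (Isabelle's powr has 0 powr 0 = 0).\<close>
definition rpow :: "real \<Rightarrow> real \<Rightarrow> real" where
  "rpow x y = (if x = 0 then (if y = 0 then 1 else 0) else x powr y)"

definition power_fun :: "real \<Rightarrow> real \<Rightarrow> real \<Rightarrow> real" where
  "power_fun a s b = a * rpow b s"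

end

theory Submission
  imports Defs
begin

text \<open>By the mean value theorem, for \<open>0 \<le> b \<le> w\<close> the excess \<open>(b + w)^c - b^c - w^c\<close> is at most
  \<open>c b (2w)^(c-1)\<close>. Symmetrising gives the bound \<open>K (b w^(c-1) + b^(c-1) w)\<close> with
  \<open>K = c 2^(c-1)\<close>, i.e. two power functions with exponents \<open>t = 1\<close> and \<open>t = c - 1\<close>
  in \<open>w\<close>; this is the claim when \<open>c > 2\<close>. When \<open>c \<le> 2\<close> the exponent \<open>c - 1\<close> is too
  small, but then \<open>b w^(c-1) \<le> b^(c-1) w\<close> for \<open>b \<le> w\<close>, so the single term \<open>K b^(c-1) w\<close>
  suffices.\<close>

lemma rpow_eq_powr: "y \<noteq> 0 \<Longrightarrow> rpow x y = x powr y"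
  by (simp add: rpow_def)

lemma powr_add_diff_le:
  fixes b w c :: real
  assumes c: "1 \<le> c" and b: "0 \<le> b" and w: "0 < w"
  shows "(w + b) powr c - w powr c \<le> c * b * (w + b) powr (c - 1)"
proof (cases "b = 0")
  case False
  with b have "w < w + b" by simp
  moreover have "\<And>x. w \<le> x \<Longrightarrow> x \<le> w + b \<Longrightarrow> DERIV (\<lambda>z. z powr c) x :> c * x powr (c - 1)"
    using w by (intro has_real_derivative_powr) auto
  ultimately obtain z where z: "w < z" "z < w + b"
    and mvt: "(w + b) powr c - w powr c = (w + b - w) * (c * z powr (c - 1))"
    using MVT2[of w "w + b" "\<lambda>z. z powr c" "\<lambda>x. c * x powr (c - 1)"] by blast
  have "c * z powr (c - 1) \<le> c * (w + b) powr (c - 1)"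
    using z w c by (intro mult_left_mono powr_mono2) auto
  from mult_left_mono[OF this b] show ?thesis
    unfolding mvt by (simp add: mult_ac)
qed simp

lemma powr_add_excess_le:
  fixes b w c :: real
  assumes c: "1 \<le> c" and b: "0 \<le> b" and bw: "b \<le> w"
  shows "(b + w) powr c - b powr c - w powr c \<le> c * 2 powr (c - 1) * b * w powr (c - 1)"
proof (cases "w = 0")
  case False
  with b bw have w: "0 < w" by simp
  have "(b + w) powr c - b powr c - w powr c \<le> (w + b) powr c - w powr c"
    by (simp add: add.commute)
  also have "\<dots> \<le> c * b * (w + b) powr (c - 1)"
    using c b w by (rule powr_add_diff_le)
  also have "\<dots> \<le> c * b * (2 * w) powr (c - 1)"
    using b bw c by (intro mult_left_mono powr_mono2) auto
  also have "\<dots> = c * 2 powr (c - 1) * b * w powr (c - 1)"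
    using w by (simp add: powr_mult mult_ac)
  finally show ?thesis .
qed (use b bw in simp)

lemma powr_add_excess_le_two_terms:
  fixes b w c :: real
  assumes c: "1 \<le> c" and b: "0 \<le> b" and w: "0 \<le> w"
  shows "(b + w) powr c - b powr c - w powr c
    \<le> c * 2 powr (c - 1) * (b * w powr (c - 1) + b powr (c - 1) * w)"
proof -
  have "0 \<le> c * 2 powr (c - 1) * (b * w powr (c - 1))" "0 \<le> c * 2 powr (c - 1) * (b powr (c - 1) * w)"
    using b w c by auto
  moreover have "(b + w) powr c - b powr c - w powr c
      \<le> c * 2 powr (c - 1) * (b * w powr (c - 1)) \<or>
    (b + w) powr c - b powr c - w powr c
      \<le> c * 2 powr (c - 1) * (b powr (c - 1) * w)"
  proof (cases "b \<le> w")
    case True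
    with powr_add_excess_le[OF c b] show ?thesis by (simp add: mult.assoc)
  next
    case False
    with powr_add_excess_le[OF c w, of b] show ?thesis by (simp add: add.commute mult_ac)
  qed
  ultimately show ?thesis
    by (auto simp: distrib_left)
qed

lemma mult_powr_le_powr_mult:
  fixes b w c :: real
  assumes c: "c \<le> 2" and b: "0 \<le> b" and bw: "b \<le> w"
  shows "b * w powr (c - 1) \<le> b powr (c - 1) * w"
proof (cases "b = 0")
  case False
  with b bw have "0 < b" "0 < w" by auto
  then have "b * w powr (c - 1) = b powr (2 - c) * (b powr (c - 1) * w powr (c - 1))"
    by (simp add: powr_add[symmetric])
  also have "\<dots> \<le> w powr (2 - c) * (b powr (c - 1) * w powr (c - 1))"
    using b bw c by (intro mult_right_mono powr_mono2) auto
  also have "\<dots> = b powr (c - 1) * w"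
    using \<open>0 < w\<close> by (simp add: powr_add[symmetric] mult.left_commute)
  finally show ?thesis .
qed simp

lemma powr_add_excess_le_one_term:
  fixes b w c :: real
  assumes c: "1 \<le> c" "c \<le> 2" and b: "0 \<le> b" and w: "0 \<le> w"
  shows "(b + w) powr c - b powr c - w powr c \<le> c * 2 powr (c - 1) * b powr (c - 1) * w"
proof (cases "b \<le> w")
  case True
  have "c * 2 powr (c - 1) * (b * w powr (c - 1)) \<le> c * 2 powr (c - 1) * (b powr (c - 1) * w)"
    using mult_powr_le_powr_mult[OF c(2) b True] c by (intro mult_left_mono) auto
  with powr_add_excess_le[OF c(1) b True] show ?thesis
    by (simp add: mult_ac)
next
  case False
  with powr_add_excess_le[OF c(1) w, of b] show ?thesis
    by (simp add: add.commute mult_ac)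
qed

theorem lemmaC1:
  fixes c :: real
  assumes "c > 1"
  shows "\<exists>(k::nat) (t::nat \<Rightarrow> real) (a::nat \<Rightarrow> real) (s::nat \<Rightarrow> real).
           (\<forall>i j. 1 \<le> i \<longrightarrow> i < j \<longrightarrow> j \<le> k \<longrightarrow> t i < t j) \<and>
           (\<forall>i\<in>{1..k}. 1 \<le> t i \<and> t i < c \<and> 0 \<le> s i \<and> s i < c) \<and>
           (\<forall>b w. 0 \<le> b \<longrightarrow> 0 \<le> w \<longrightarrow>
              rpow (b + w) c - rpow b c - rpow w c
                \<le> (\<Sum>i=1..k. power_fun (a i) (s i) b * rpow w (t i)))"
proof -
  define K where "K = c * 2 powr (c - 1)"
  have rpow_powr: "rpow x c = x powr c" "rpow x (c - 1) = x powr (c - 1)" for x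
    using assms by (simp_all add: rpow_eq_powr)
  show ?thesis
  proof (cases "c \<le> 2")
    case True
    have "rpow (b + w) c - rpow b c - rpow w c \<le> power_fun K (c - 1) b * rpow w 1"
      if "0 \<le> b" "0 \<le> w" for b w
      using powr_add_excess_le_one_term[of c b w] that assms True
      by (simp add: rpow_powr rpow_eq_powr power_fun_def K_def mult_ac)
    then show ?thesis
      using assms by (intro exI[of _ 1] exI[of _ "\<lambda>_. 1"] exI[of _ "\<lambda>_. K"] exI[of _ "\<lambda>_. c - 1"]) auto
  next
    case False
    define t where "t i = (if i = 1 then 1 else c - 1)" for i :: nat
    define s where "s i = (if i = 1 then c - 1 else 1)" for i :: nat
    have "rpow (b + w) c - rpow b c - rpow w c \<le> (\<Sum>i=1..2. power_fun K (s i) b * rpow w (t i))"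
      if "0 \<le> b" "0 \<le> w" for b w
      using powr_add_excess_le_two_terms[of c b w] that assms
      by (simp add: numeral_2_eq_2 rpow_powr rpow_eq_powr power_fun_def K_def s_def t_def
          distrib_left mult_ac)
    moreover have "\<forall>i j. 1 \<le> i \<longrightarrow> i < j \<longrightarrow> j \<le> 2 \<longrightarrow> t i < t j"
      using False by (auto simp: t_def)
    ultimately show ?thesis
      using assms False by (intro exI[of _ 2] exI[of _ t] exI[of _ "\<lambda>_. K"] exI[of _ s])
        (auto simp: t_def s_def)
  qed
qed

end
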